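(* Let $U$ be a random utility function, fix $x\ge0$, and assume that $\mathcal A(U,G,x)=\mathcal A(G,x)$ for all $G\in\mathcal W^0_T$. Define $\rho_x(G):=p(-G,x)$. 1. $\rho_x$ is a monetary measure of risk on $\mathcal W^0_T$. 2. If each $S_t$ is Borel measurable on $\Omega^t$, $NA(\mathcal Q^T)$ holds and $u(0,x)>-\infty$, then $\rho_x$ is a convex monetary measure of risk on $\{G\in\mathcal W^0_T: u(-G,z)<\infty\ \text{for all } z\in\mathbb R\}$. 3. If furthermore $u(0,x-\delta)<u(0,x)$ for all $\delta>0$, then $\rho_x$ is normalized.
   Context: Framework: $T\ge1$; Polish spaces $\Omega_1,\dots,\Omega_T$; $\Omega^t:=\Omega_1\times\cdots\times\Omega_t$. $\mathfrak P(X)$: Borel probability measures on Polish $X$; $\mathcal B_c(X)$: universal $\sigma$-algebra, each $P$ extended to it. $\mathcal SK_t$: universally measurable stochastic kernels on $\Omega_t$ given $\Omega^{t-1}$; $P\otimes p(A):=\int\int1_A(\omega^{t-1},\omega_t)p(d\omega_t,\omega^{t-1})P(d\omega^{t-1})$. Given random sets $\mathcal Q_{t+1}:\Omega^t\twoheadrightarrow\mathfrak P(\Omega_{t+1})$, $\mathcal Q^T:=\{Q_1\otimes q_2\otimes\cdots\otimes q_T:Q_1\in\mathcal Q_1,\ q_{s+1}\in\mathcal SK_{s+1},\ q_{s+1}(\cdot,\omega^s)\in\mathcal Q_{s+1}(\omega^s)\ Q_s\text{-a.s.}\}$. "$\mathcal Q^T$-q.s." means outside a set contained, for every $P\in\mathcal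 Q^T$, in a $P$-null universally measurable set. $\mathcal W^0_T$: universally measurable $X:\Omega^T\to\mathbb R\cup\{\pm\infty\}$. $S=(S_t)_{0\le t\le T}$ $\mathbb R^d$-valued with $S_t$ universally measurable on $\Omega^t$; $\Phi$: strategies $\phi=(\phi_t)$, $\phi_t:\Omega^{t-1}\to\mathbb R^d$ universally measurable; $V_T^{x,\phi}:=x+\sum_{s=1}^T\phi_s\cdot(S_s-S_{s-1})$. $NA(\mathcal Q^T)$: for all $\phi$, $V_T^{0,\phi}\ge0$ q.s. implies $V_T^{0,\phi}=0$ q.s. $\mathcal A(G,x):=\{\phi\in\Phi:V_T^{x,\phi}\ge G\ \mathcal Q^T\text{-q.s.}\}$. A random utility function is $U:\Omega^T\times(0,\infty)\to\mathbb R$ with $U(\cdot,x)$ universally measurable and $U(\omega^T,\cdot)$ concave, strictly increasing, $C^2$ on $(0,\infty)$, extended by right-continuity at $0$ and by $-\infty$ on $(-\infty,0)$. $\Phi(U,G,x):=\{\phi\in\Phi:E_PU^+(\cdot,V_T^{x,\phi}-G)<\infty\ \forall P\in\mathcal Q^T\}$, $\mathcal A(U,G,x):=\Phi(U,G,x)\cap\mathcal A(G,x)$, $u(G,x):=\sup_{\phi\in\mathcal A(U,G,x)}\inf_{P\in\mathcal Q^T}E_PU(\cdot,V_T^{x,\phi}-G)$ ($-\infty$ if $\mathcal A(U,G,x)=\emptyset$), $p(G,x):=\inf\{z\in\mathbb R:u(G,x+z)\ge u(0,x)\}$ ($+\infty$ if empty). A monetary measure of risk on a set $\mathcal X\subset\mathcal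 W^0_T$ is a map $\rho:\mathcal X\to\mathbb R\cup\{\pm\infty\}$ with $\rho(G)\le\rho(H)$ whenever $G\ge H$ $\mathcal Q^T$-q.s., and $\rho(G+m)=\rho(G)-m$ for $m\in\mathbb R$; it is normalized if $\rho(0)=0$, convex if $\rho(\lambda G+(1-\lambda)H)\le\lambda\rho(G)+(1-\lambda)\rho(H)$ for $\lambda\in[0,1]$. *)

theory Defs
  imports "HOL-Analysis.Analysis" "HOL-Probability.Probability"
begin

text \<open>Time runs over 1..T. Each Polish space Omega_t is represented as a
  closed subset Om t of a fixed Polish type 'a (every Polish space is homeomorphic to a
  closed subset of nat => real, which is of class polish_space). A point of Omega^t is an
  extensional function on {1..t} (the space of PiM {1..t}); Omega^0 is a singleton.\<close>

definition OmS :: "(nat \<Rightarrow> 'a::polish_space set) \<Rightarrow> nat \<Rightarrow> 'a measure" where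
  "OmS Om s = restrict_space borel (Om s)"

text \<open>Borel sigma-algebra on Omega^t (product sigma-algebra = Borel of product, separable case).\<close>
definition OmP :: "(nat \<Rightarrow> 'a::polish_space set) \<Rightarrow> nat \<Rightarrow> (nat \<Rightarrow> 'a) measure" where
  "OmP Om t = PiM {1..t} (OmS Om)"

definition probs :: "'b measure \<Rightarrow> 'b measure set" where
  "probs M = {P. prob_space P \<and> sets P = sets M}"

definition univ_sets :: "'b measure \<Rightarrow> 'b set set" where
  "univ_sets M = {A. A \<subseteq> space M \<and> (\<forall>P\<in>probs M. A \<in> sets (completion P))}"

definition univ :: "'b measure \<Rightarrow> 'b measure" where
  "univ M = sigma (space M) (univ_sets M)"

definition SK :: "(nat \<Rightarrow> 'a::polish_space set) \<Rightarrow> nat \<Rightarrow> ((nat \<Rightarrow> 'a) \<Rightarrow> 'a measure) \<Rightarrow> bool" where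
  "SK Om t k \<longleftrightarrow> (\<forall>w\<in>space (OmP Om (t - 1)). k w \<in> probs (OmS Om t)) \<and>
     (\<forall>A\<in>sets (OmS Om t). (\<lambda>w. emeasure (k w) A) \<in> borel_measurable (univ (OmP Om (t - 1))))"

definition kcomp :: "(nat \<Rightarrow> 'a::polish_space set) \<Rightarrow> nat \<Rightarrow> (nat \<Rightarrow> 'a) measure
    \<Rightarrow> ((nat \<Rightarrow> 'a) \<Rightarrow> 'a measure) \<Rightarrow> (nat \<Rightarrow> 'a) measure" where
  "kcomp Om t P p = measure_of (space (OmP Om t)) (sets (OmP Om t))
     (\<lambda>A. \<integral>\<^sup>+ w. (\<integral>\<^sup>+ y. indicator A (w(t := y)) \<partial>(p w)) \<partial>(completion P))"

text \<open>Q_1 (x) q_2 (x) ... (x) q_t, starting from the point mass on Omega^0 (Q_1 = q_1 at that point).\<close>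
fun kprod :: "(nat \<Rightarrow> 'a::polish_space set) \<Rightarrow> (nat \<Rightarrow> (nat \<Rightarrow> 'a) \<Rightarrow> 'a measure) \<Rightarrow> nat
    \<Rightarrow> (nat \<Rightarrow> 'a) measure" where
  "kprod Om q 0 = return (OmP Om 0) (\<lambda>_. undefined)"
| "kprod Om q (Suc t) = kcomp Om (Suc t) (kprod Om q t) (q (Suc t))"

text \<open>The set Q^T; Qs t w is the random set Q_t(w) for w in Omega^(t-1).\<close>
definition QT :: "(nat \<Rightarrow> 'a::polish_space set) \<Rightarrow> nat \<Rightarrow> (nat \<Rightarrow> (nat \<Rightarrow> 'a) \<Rightarrow> 'a measure set)
    \<Rightarrow> (nat \<Rightarrow> 'a) measure set" where
  "QT Om T Qs = {kprod Om q T | q. \<forall>t\<in>{1..T}. SK Om t (q t) \<and>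
       (AE w in completion (kprod Om q (t - 1)). q t w \<in> Qs t w)}"

definition qs :: "'b measure set \<Rightarrow> ('b \<Rightarrow> bool) \<Rightarrow> bool" where
  "qs Ps \<phi> \<longleftrightarrow> (\<forall>P\<in>Ps. AE w in completion P. \<phi> w)"

definition W0 :: "(nat \<Rightarrow> 'a::polish_space set) \<Rightarrow> nat \<Rightarrow> ((nat \<Rightarrow> 'a) \<Rightarrow> ereal) set" where
  "W0 Om T = {G. G \<in> borel_measurable (univ (OmP Om T))}"

definition Strat :: "(nat \<Rightarrow> 'a::polish_space set) \<Rightarrow> nat \<Rightarrow> (nat \<Rightarrow> (nat \<Rightarrow> 'a) \<Rightarrow> 'd::euclidean_space) set" where
  "Strat Om T = {\<phi>. \<forall>t\<in>{1..T}. \<phi> t \<in> borel_measurable (univ (OmP Om (t - 1)))}"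

text \<open>Terminal wealth V_T^{x,phi}, evaluated on omega^T; omega^t is the restriction to {1..t}.\<close>
definition VT :: "nat \<Rightarrow> (nat \<Rightarrow> (nat \<Rightarrow> 'a) \<Rightarrow> 'd::euclidean_space) \<Rightarrow> real
    \<Rightarrow> (nat \<Rightarrow> (nat \<Rightarrow> 'a) \<Rightarrow> 'd) \<Rightarrow> (nat \<Rightarrow> 'a) \<Rightarrow> real" where
  "VT T S x \<phi> w = x + (\<Sum>s=1..T. inner (\<phi> s (restrict w {1..s - 1}))
       (S s (restrict w {1..s}) - S (s - 1) (restrict w {1..s - 1})))"

definition NA :: "(nat \<Rightarrow> 'a::polish_space set) \<Rightarrow> nat \<Rightarrow> (nat \<Rightarrow> (nat \<Rightarrow> 'a) \<Rightarrow> 'a measure set)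
    \<Rightarrow> (nat \<Rightarrow> (nat \<Rightarrow> 'a) \<Rightarrow> 'd::euclidean_space) \<Rightarrow> bool" where
  "NA Om T Qs S \<longleftrightarrow> (\<forall>\<phi>\<in>Strat Om T.
      qs (QT Om T Qs) (\<lambda>w. VT T S 0 \<phi> w \<ge> 0) \<longrightarrow> qs (QT Om T Qs) (\<lambda>w. VT T S 0 \<phi> w = 0))"

definition AG :: "(nat \<Rightarrow> 'a::polish_space set) \<Rightarrow> nat \<Rightarrow> (nat \<Rightarrow> (nat \<Rightarrow> 'a) \<Rightarrow> 'a measure set)
    \<Rightarrow> (nat \<Rightarrow> (nat \<Rightarrow> 'a) \<Rightarrow> 'd::euclidean_space) \<Rightarrow> ((nat \<Rightarrow> 'a) \<Rightarrow> ereal) \<Rightarrow> real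
    \<Rightarrow> (nat \<Rightarrow> (nat \<Rightarrow> 'a) \<Rightarrow> 'd) set" where
  "AG Om T Qs S G x = {\<phi>\<in>Strat Om T. qs (QT Om T Qs) (\<lambda>w. ereal (VT T S x \<phi> w) \<ge> G w)}"

text \<open>Random utility functions: U w is concave, strictly increasing and C^2 on (0,oo);
  values of U w on (-oo,0] are irrelevant, see Uext.\<close>
definition random_utility :: "(nat \<Rightarrow> 'a::polish_space set) \<Rightarrow> nat \<Rightarrow> ((nat \<Rightarrow> 'a) \<Rightarrow> real \<Rightarrow> real) \<Rightarrow> bool" where
  "random_utility Om T U \<longleftrightarrow>
     (\<forall>y>0. (\<lambda>w. U w y) \<in> borel_measurable (univ (OmP Om T))) \<and>
     (\<forall>w\<in>space (OmP Om T). concave_on {0<..} (U w) \<and> strict_mono_on {0<..} (U w) \<and>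
        (\<exists>U1 U2. (\<forall>y>0. (U w has_real_derivative U1 y) (at y) \<and> (U1 has_real_derivative U2 y) (at y))
                 \<and> continuous_on {0<..} U2))"

definition Uext :: "((nat \<Rightarrow> 'a) \<Rightarrow> real \<Rightarrow> real) \<Rightarrow> (nat \<Rightarrow> 'a) \<Rightarrow> ereal \<Rightarrow> ereal" where
  "Uext U w y = (if y < 0 then -\<infinity>
      else if y = 0 then Lim (at_right (0::real)) (\<lambda>z. ereal (U w z))
      else if y = \<infinity> then Lim at_top (\<lambda>z. ereal (U w z))
      else ereal (U w (real_of_ereal y)))"

definition Epos :: "'b measure \<Rightarrow> ('b \<Rightarrow> ereal) \<Rightarrow> ennreal" where
  "Epos P f = (\<integral>\<^sup>+ w. e2ennreal (f w) \<partial>(completion P))"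

definition Eneg :: "'b measure \<Rightarrow> ('b \<Rightarrow> ereal) \<Rightarrow> ennreal" where
  "Eneg P f = (\<integral>\<^sup>+ w. e2ennreal (- f w) \<partial>(completion P))"

definition Ex :: "'b measure \<Rightarrow> ('b \<Rightarrow> ereal) \<Rightarrow> ereal" where
  "Ex P f = (if Epos P f = \<infinity> \<and> Eneg P f = \<infinity> then -\<infinity>
             else enn2ereal (Epos P f) - enn2ereal (Eneg P f))"

definition AUG :: "(nat \<Rightarrow> 'a::polish_space set) \<Rightarrow> nat \<Rightarrow> (nat \<Rightarrow> (nat \<Rightarrow> 'a) \<Rightarrow> 'a measure set)
    \<Rightarrow> (nat \<Rightarrow> (nat \<Rightarrow> 'a) \<Rightarrow> 'd::euclidean_space) \<Rightarrow> ((nat \<Rightarrow> 'a) \<Rightarrow> real \<Rightarrow> real)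
    \<Rightarrow> ((nat \<Rightarrow> 'a) \<Rightarrow> ereal) \<Rightarrow> real \<Rightarrow> (nat \<Rightarrow> (nat \<Rightarrow> 'a) \<Rightarrow> 'd) set" where
  "AUG Om T Qs S U G x = {\<phi>\<in>AG Om T Qs S G x. \<forall>P\<in>QT Om T Qs.
      Epos P (\<lambda>w. Uext U w (ereal (VT T S x \<phi> w) - G w)) < \<infinity>}"

text \<open>Value function u(G,x); SUP over the empty set is -oo.\<close>
definition uval :: "(nat \<Rightarrow> 'a::polish_space set) \<Rightarrow> nat \<Rightarrow> (nat \<Rightarrow> (nat \<Rightarrow> 'a) \<Rightarrow> 'a measure set)
    \<Rightarrow> (nat \<Rightarrow> (nat \<Rightarrow> 'a) \<Rightarrow> 'd::euclidean_space) \<Rightarrow> ((nat \<Rightarrow> 'a) \<Rightarrow> real \<Rightarrow> real)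
    \<Rightarrow> ((nat \<Rightarrow> 'a) \<Rightarrow> ereal) \<Rightarrow> real \<Rightarrow> ereal" where
  "uval Om T Qs S U G x = (SUP \<phi>\<in>AUG Om T Qs S U G x. INF P\<in>QT Om T Qs.
      Ex P (\<lambda>w. Uext U w (ereal (VT T S x \<phi> w) - G w)))"

text \<open>Indifference price p(G,x); Inf of the empty set is +oo.\<close>
definition pval :: "(nat \<Rightarrow> 'a::polish_space set) \<Rightarrow> nat \<Rightarrow> (nat \<Rightarrow> (nat \<Rightarrow> 'a) \<Rightarrow> 'a measure set)
    \<Rightarrow> (nat \<Rightarrow> (nat \<Rightarrow> 'a) \<Rightarrow> 'd::euclidean_space) \<Rightarrow> ((nat \<Rightarrow> 'a) \<Rightarrow> real \<Rightarrow> real)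
    \<Rightarrow> ((nat \<Rightarrow> 'a) \<Rightarrow> ereal) \<Rightarrow> real \<Rightarrow> ereal" where
  "pval Om T Qs S U G x = Inf (ereal ` {z. uval Om T Qs S U G (x + z) \<ge> uval Om T Qs S U (\<lambda>_. 0) x})"

definition monetary_risk :: "'b measure set \<Rightarrow> ('b \<Rightarrow> ereal) set \<Rightarrow> (('b \<Rightarrow> ereal) \<Rightarrow> ereal) \<Rightarrow> bool" where
  "monetary_risk Ps X \<rho> \<longleftrightarrow>
     (\<forall>G\<in>X. \<forall>H\<in>X. qs Ps (\<lambda>w. G w \<ge> H w) \<longrightarrow> \<rho> G \<le> \<rho> H) \<and>
     (\<forall>G\<in>X. \<forall>m::real. (\<lambda>w. G w + ereal m) \<in> X \<longrightarrow> \<rho> (\<lambda>w. G w + ereal m) = \<rho> G - ereal m)"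

definition convex_risk :: "'b measure set \<Rightarrow> ('b \<Rightarrow> ereal) set \<Rightarrow> (('b \<Rightarrow> ereal) \<Rightarrow> ereal) \<Rightarrow> bool" where
  "convex_risk Ps X \<rho> \<longleftrightarrow> monetary_risk Ps X \<rho> \<and>
     (\<forall>G\<in>X. \<forall>H\<in>X. \<forall>l\<in>{0..1::real}.
        (\<lambda>w. ereal l * G w + ereal (1 - l) * H w) \<in> X \<longrightarrow>
        \<rho> (\<lambda>w. ereal l * G w + ereal (1 - l) * H w) \<le> ereal l * \<rho> G + ereal (1 - l) * \<rho> H)"

end

theory Submission
  imports Defs
begin

text \<open>Monotonicity of the indifference price and cash invariance are inherited from the
  value function: a larger claim shrinks the set of hedging strategies and lowers utility
  pointwise, and shifting the claim by a constant is the same as shifting the initial capital.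
  For convexity, the convex combination of two strategies hedging \<open>G\<close> from \<open>x + z\<^sub>1\<close> and
  \<open>H\<close> from \<open>x + z\<^sub>2\<close> hedges the combined claim from the combined capital; concavity of the
  extended utility and of the expectation then shows that the utility level \<open>u(0,x)\<close> is still
  attained, so the combined price is at most the combination of the prices. Normalisation
  holds because any capital strictly below \<open>x\<close> yields strictly less than \<open>u(0,x)\<close>.\<close>

subsection \<open>Universally measurable sets and the measures of \<open>\<Q>\<^sup>T\<close>\<close>

lemma sets_univ: "sets (univ M) = sigma_sets (space M) (univ_sets M)"
  unfolding univ_def by (rule sets_measure_of) (auto simp: univ_sets_def)

lemma space_univ [simp]: "space (univ M) = space M"
  unfolding univ_def by (rule space_measure_of) (auto simp: univ_sets_def)

lemma kprod_sets_emeasure_le_1: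
  assumes SK: "\<forall>s\<in>{1..T}. SK Om s (q s)" and "t \<le> T"
  shows "sets (kprod Om q t) = sets (OmP Om t) \<and> emeasure (kprod Om q t) (space (kprod Om q t)) \<le> 1"
  using \<open>t \<le> T\<close>
proof (induction t)
  case 0
  have "emeasure (return (OmP Om 0) (\<lambda>_. undefined)) X \<le> 1" for X
    by (cases "X \<in> sets (OmP Om 0)") (auto simp: emeasure_notin_sets indicator_def)
  then show ?case by (simp add: indicator_def)
next
  case (Suc t)
  let ?P = "kprod Om q t" and ?p = "q (Suc t)"
  have IH: "sets ?P = sets (OmP Om t)" "emeasure ?P (space ?P) \<le> 1" using Suc by auto
  have space_P: "space ?P = space (OmP Om t)" using IH(1) by (rule sets_eq_imp_space_eq)
  have "sigma_algebra (space (OmP Om (Suc t))) (sets (OmP Om (Suc t)))"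
    by (rule sets.sigma_algebra_axioms)
  then have sets: "sets (kprod Om q (Suc t)) = sets (OmP Om (Suc t))"
    by (simp add: kcomp_def sigma_algebra.sets_measure_of_eq)
  have SK_t: "SK Om (Suc t) ?p" using SK Suc.prems by auto
  have "(\<integral>\<^sup>+ w. (\<integral>\<^sup>+ y. indicator A (w(Suc t := y)) \<partial>(?p w)) \<partial>(completion ?P)) \<le> 1" for A
  proof -
    have "(\<integral>\<^sup>+ w. (\<integral>\<^sup>+ y. indicator A (w(Suc t := y)) \<partial>(?p w)) \<partial>(completion ?P))
        \<le> (\<integral>\<^sup>+ w. 1 \<partial>(completion ?P))"
    proof (rule nn_integral_mono)
      fix w assume "w \<in> space (completion ?P)"
      then have "?p w \<in> probs (OmS Om (Suc t))" using SK_t space_P unfolding SK_def by auto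
      then interpret prob_space "?p w" unfolding probs_def by simp
      have "(\<integral>\<^sup>+ y. indicator A (w(Suc t := y)) \<partial>(?p w)) \<le> (\<integral>\<^sup>+ y. 1 \<partial>(?p w))"
        by (rule nn_integral_mono) (simp add: indicator_def)
      then show "(\<integral>\<^sup>+ y. indicator A (w(Suc t := y)) \<partial>(?p w)) \<le> 1"
        by (simp add: emeasure_space_1)
    qed
    also have "\<dots> \<le> 1" using IH(2) by (simp add: emeasure_completion)
    finally show ?thesis .
  qed
  then have "emeasure (kprod Om q (Suc t)) (space (kprod Om q (Suc t))) \<le> 1"
    by (simp add: kcomp_def emeasure_measure_of_conv)
  with sets show ?case by simp
qed

lemma QT_sets_emeasure_le_1:
  assumes "P \<in> QT Om T Qs"
  shows "sets P = sets (OmP Om T)" "emeasure P (space P) \<le> 1"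
  using assms kprod_sets_emeasure_le_1[of T Om _ T] unfolding QT_def by auto

lemma space_QT: "P \<in> QT Om T Qs \<Longrightarrow> space P = space (OmP Om T)"
  by (rule sets_eq_imp_space_eq) (rule QT_sets_emeasure_le_1)

text \<open>A finite measure is a multiple of a probability measure with the same null sets,
  unless it is zero, in which case every subset of the space is in its completion.\<close>

lemma univ_sets_subset_completion:
  assumes sets_P: "sets P = sets M" and le_1: "emeasure P (space P) \<le> 1"
  shows "univ_sets M \<subseteq> sets (completion P)"
proof
  fix A assume A: "A \<in> univ_sets M"
  have space_P: "space P = space M" using sets_P by (rule sets_eq_imp_space_eq)
  show "A \<in> sets (completion P)"
  proof (cases "emeasure P (space P) = 0")
    case True
    then have "space P \<in> null_sets P" by auto
    then show ?thesis using A space_P by (intro null_sets_completion[of "space P"]) (auto simp: univ_sets_def)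
  next
    case False
    obtain r where r: "emeasure P (space P) = ennreal r" "r \<ge> 0"
      using le_1 by (cases "emeasure P (space P)") (auto simp: top_unique)
    have r_pos: "r > 0" using False r by (auto simp: ennreal_eq_0_iff)
    define P' where "P' = scale_measure (ennreal (1 / r)) P"
    have "emeasure P' (space P') = ennreal (1 / r) * ennreal r"
      by (simp add: P'_def space_scale_measure r)
    also have "\<dots> = 1" using r_pos by (simp flip: ennreal_mult)
    finally have "P' \<in> probs M" by (simp add: probs_def prob_spaceI P'_def sets_P)
    then have "A \<in> sets (completion P')" using A by (simp add: univ_sets_def)
    moreover have "null_sets P' = null_sets P"
      using r_pos by (auto simp: P'_def null_sets_def ennreal_eq_0_iff)
    ultimately show ?thesis by (simp add: sets_completion P'_def)
  qed
qed

lemma sets_univ_subset_completion: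
  assumes "sets P = sets M" "emeasure P (space P) \<le> 1"
  shows "sets (univ M) \<subseteq> sets (completion P)"
proof -
  have "space P = space M" using assms(1) by (rule sets_eq_imp_space_eq)
  moreover have "sigma_algebra (space (completion P)) (sets (completion P))"
    by (rule sets.sigma_algebra_axioms)
  ultimately show ?thesis
    using univ_sets_subset_completion[OF assms] by (simp add: sets_univ sigma_algebra.sigma_sets_subset)
qed

lemma measurable_univ_completion:
  assumes "f \<in> measurable (univ M) K" "sets P = sets M" "emeasure P (space P) \<le> 1"
  shows "f \<in> measurable (completion P) K"
  using assms sets_univ_subset_completion[OF assms(2,3)] sets_eq_imp_space_eq[OF assms(2)]
  unfolding measurable_def by auto

lemma measurable_univ_completion_QT:
  "P \<in> QT Om T Qs \<Longrightarrow> f \<in> measurable (univ (OmP Om T)) K \<Longrightarrow> f \<in> measurable (completion P) K"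
  using measurable_univ_completion QT_sets_emeasure_le_1 by blast

text \<open>The null sets of the completion of the image measure \<open>distr P N r\<close> pull back to null
  sets of \<open>P\<close>.\<close>

lemma vimage_sets_univ:
  assumes r: "r \<in> measurable M N" and X: "X \<in> sets (univ N)"
  shows "r -` X \<inter> space M \<in> univ_sets M"
  unfolding univ_sets_def
proof safe
  fix P assume "P \<in> probs M"
  then have prob_P: "prob_space P" and sets_P: "sets P = sets M" by (auto simp: probs_def)
  have space_P: "space P = space M" using sets_P by (rule sets_eq_imp_space_eq)
  have r_P: "r \<in> measurable P N" using r sets_P by (simp cong: measurable_cong_sets)
  let ?Q = "distr P N r"
  have "prob_space ?Q" using prob_P r_P by (simp add: prob_space.prob_space_distr)
  then have "emeasure ?Q (space ?Q) \<le> 1" by (simp only: prob_space.emeasure_space_1)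
  then have "X \<in> sets (completion ?Q)" using X sets_univ_subset_completion[of ?Q N] by auto
  then obtain S0 N0 N' where X_eq: "X = S0 \<union> N0" and "N0 \<subseteq> N'" "N' \<in> null_sets ?Q" "S0 \<in> sets N"
    by (auto elim: sets_completionE)
  then have "N' \<in> sets N" by (auto simp: null_sets_def)
  then have "r -` N' \<inter> space P \<in> null_sets P"
    using \<open>N' \<in> null_sets ?Q\<close> measurable_sets[OF r_P] by (auto simp: null_sets_def emeasure_distr r_P)
  moreover have "r -` N0 \<inter> space P \<subseteq> r -` N' \<inter> space P" using \<open>N0 \<subseteq> N'\<close> by auto
  moreover have "r -` X \<inter> space P = (r -` S0 \<inter> space P) \<union> (r -` N0 \<inter> space P)" using X_eq by auto
  ultimately have "r -` X \<inter> space P \<in> sets (completion P)"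
    using measurable_sets[OF r_P \<open>S0 \<in> sets N\<close>] by (intro sets_completionI) auto
  then show "r -` X \<inter> space M \<in> sets (completion P)" using space_P by simp
qed

lemma measurable_univ_comp:
  assumes r: "r \<in> measurable M N" and f: "f \<in> measurable (univ N) K"
  shows "(\<lambda>w. f (r w)) \<in> measurable (univ M) K"
proof (rule measurableI)
  fix w assume "w \<in> space (univ M)"
  then show "f (r w) \<in> space K" using measurable_space[OF r] measurable_space[OF f] by auto
next
  fix B assume "B \<in> sets K"
  then have "f -` B \<inter> space N \<in> sets (univ N)" using measurable_sets[OF f] by (simp only: space_univ)
  then have "r -` (f -` B \<inter> space N) \<inter> space M \<in> univ_sets M" by (rule vimage_sets_univ[OF r])
  then have "r -` (f -` B \<inter> space N) \<inter> space M \<in> sets (univ M)"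
    unfolding sets_univ by (rule sigma_sets.Basic)
  moreover have "(\<lambda>w. f (r w)) -` B \<inter> space (univ M) = r -` (f -` B \<inter> space N) \<inter> space M"
    using measurable_space[OF r] by auto
  ultimately show "(\<lambda>w. f (r w)) -` B \<inter> space (univ M) \<in> sets (univ M)" by simp
qed


subsection \<open>The extended utility function\<close>

definition ext_utility :: "(real \<Rightarrow> real) \<Rightarrow> ereal \<Rightarrow> ereal" where
  "ext_utility f y = (if y < 0 then -\<infinity>
      else if y = 0 then Lim (at_right (0::real)) (\<lambda>z. ereal (f z))
      else if y = \<infinity> then Lim at_top (\<lambda>z. ereal (f z))
      else ereal (f (real_of_ereal y)))"

lemma Uext_eq_ext_utility: "Uext U w y = ext_utility (U w) y"
  unfolding Uext_def ext_utility_def by (rule refl)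

lemma ereal_convex_comb_le:
  fixes a b :: ereal
  assumes "0 < l" "l < 1" "a \<le> b"
  shows "ereal l * a + ereal (1 - l) * b \<le> b"
proof (cases b)
  case (real c)
  show ?thesis
  proof (cases a)
    case (real d)
    have "l * d \<le> l * c" using assms real \<open>b = ereal c\<close> by (intro mult_left_mono) auto
    then show ?thesis using real \<open>b = ereal c\<close> by (simp add: algebra_simps)
  qed (use assms real in auto)
qed (use assms in auto)

locale pos_utility =
  fixes f :: "real \<Rightarrow> real"
  assumes strict_mono: "strict_mono_on {0<..} f"
    and concave: "concave_on {0<..} f"
    and continuous: "continuous_on {0<..} f"
begin

lemma mono: "0 < a \<Longrightarrow> a \<le> b \<Longrightarrow> f a \<le> f b"
  using strict_mono_onD[OF strict_mono, of a b] by (cases "a = b") auto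

definition inf_val :: ereal where "inf_val = (INF z\<in>{0<..}. ereal (f z))"

definition sup_val :: ereal where "sup_val = (SUP z\<in>{0<..}. ereal (f z))"

lemma inf_val_le: "z > 0 \<Longrightarrow> inf_val \<le> ereal (f z)"
  unfolding inf_val_def by (rule INF_lower) auto

lemma sup_val_ge: "z > 0 \<Longrightarrow> ereal (f z) \<le> sup_val"
  unfolding sup_val_def by (rule SUP_upper) auto

lemma inf_val_le_sup_val: "inf_val \<le> sup_val"
  using inf_val_le[of 1] sup_val_ge[of 1] by simp

lemma tendsto_inf_val: "((\<lambda>z. ereal (f z)) \<longlongrightarrow> inf_val) (at_right 0)"
proof (rule order_tendstoI)
  fix a assume "a < inf_val"
  then have "\<forall>z>0. a < ereal (f z)" using inf_val_le by (auto intro: less_le_trans)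
  then show "eventually (\<lambda>z. a < ereal (f z)) (at_right 0)"
    using eventually_at_right_real[of 0 1] by (auto elim: eventually_mono)
next
  fix a assume "inf_val < a"
  then obtain z0 where z0: "z0 > 0" "ereal (f z0) < a"
    unfolding inf_val_def by (auto simp: INF_less_iff)
  have "eventually (\<lambda>z. z \<in> {0<..<z0}) (at_right 0)" by (rule eventually_at_right_real) fact
  then show "eventually (\<lambda>z. ereal (f z) < a) (at_right 0)"
  proof (rule eventually_mono)
    fix z assume "z \<in> {0<..<z0}"
    then have "f z \<le> f z0" using mono[of z z0] by auto
    then show "ereal (f z) < a" using z0 by (meson ereal_less_eq(3) order_le_less_trans)
  qed
qed

lemma tendsto_sup_val: "((\<lambda>z. ereal (f z)) \<longlongrightarrow> sup_val) at_top"
proof (rule order_tendstoI)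
  fix a assume "sup_val < a"
  then have "\<forall>z>0. ereal (f z) < a" using sup_val_ge by (auto intro: le_less_trans)
  then show "eventually (\<lambda>z. ereal (f z) < a) at_top"
    by (auto simp: eventually_at_top_linorder intro!: exI[of _ 1])
next
  fix a assume "a < sup_val"
  then obtain z0 where z0: "z0 > 0" "a < ereal (f z0)"
    unfolding sup_val_def by (auto simp: less_SUP_iff)
  show "eventually (\<lambda>z. a < ereal (f z)) at_top"
    unfolding eventually_at_top_linorder
  proof (intro exI allI impI)
    fix z assume "z0 \<le> z"
    then have "f z0 \<le> f z" using mono[of z0 z] z0 by auto
    then show "a < ereal (f z)" using z0 by (meson ereal_less_eq(3) less_le_trans)
  qed
qed

lemma inf_val_eq_INF_nat: "inf_val = (INF n. ereal (f (1 / real (Suc n))))"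
proof (rule antisym)
  show "inf_val \<le> (INF n. ereal (f (1 / real (Suc n))))"
    by (rule INF_greatest) (rule inf_val_le, simp)
  show "(INF n. ereal (f (1 / real (Suc n)))) \<le> inf_val"
    unfolding inf_val_def
  proof (rule INF_greatest)
    fix z :: real assume "z \<in> {0<..}"
    then obtain n where n: "inverse (real (Suc n)) < z" using reals_Archimedean by auto
    have "f (1 / real (Suc n)) \<le> f z" using n by (intro mono) (auto simp: field_simps)
    then show "(INF n. ereal (f (1 / real (Suc n)))) \<le> ereal (f z)"
      by (intro INF_lower2[of n]) auto
  qed
qed

lemma sup_val_eq_SUP_nat: "sup_val = (SUP n. ereal (f (real (Suc n))))"
proof (rule antisym)
  show "(SUP n. ereal (f (real (Suc n)))) \<le> sup_val"
    by (rule SUP_least) (rule sup_val_ge, simp)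
  show "sup_val \<le> (SUP n. ereal (f (real (Suc n))))"
    unfolding sup_val_def
  proof (rule SUP_least)
    fix z :: real assume z: "z \<in> {0<..}"
    obtain n where "z \<le> real n" using real_arch_simple by auto
    then have "f z \<le> f (real (Suc n))" using z by (intro mono) auto
    then show "ereal (f z) \<le> (SUP n. ereal (f (real (Suc n))))"
      by (intro SUP_upper2[of n]) auto
  qed
qed

lemma ext_utility_simps:
  "y < 0 \<Longrightarrow> ext_utility f y = -\<infinity>"
  "ext_utility f 0 = inf_val"
  "ext_utility f \<infinity> = sup_val"
  "r > 0 \<Longrightarrow> ext_utility f (ereal r) = ereal (f r)"
  using tendsto_Lim[OF _ tendsto_inf_val] tendsto_Lim[OF _ tendsto_sup_val]
  by (auto simp: ext_utility_def)

lemma ext_utility_mono: "a \<le> b \<Longrightarrow> ext_utility f a \<le> ext_utility f b"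
proof (cases "a < 0")
  case False
  assume "a \<le> b"
  then show ?thesis
  proof (cases b)
    case PInf
    then show ?thesis using \<open>\<not> a < 0\<close> inf_val_le_sup_val sup_val_ge
      by (cases a rule: ereal_cases; cases "a = 0") (auto simp: ext_utility_simps)
  next
    case (real rb)
    then obtain ra where "a = ereal ra" using \<open>a \<le> b\<close> \<open>\<not> a < 0\<close> by (cases a) auto
    then show ?thesis using \<open>a \<le> b\<close> \<open>\<not> a < 0\<close> real mono[of ra rb] inf_val_le[of rb]
      by (cases "ra = 0"; cases "rb = 0") (auto simp: ext_utility_simps zero_ereal_def[symmetric])
  qed (use \<open>a \<le> b\<close> \<open>\<not> a < 0\<close> in auto)
qed (simp add: ext_utility_simps)

lemma ext_utility_le_sup_val: "ext_utility f y \<le> sup_val"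
  using ext_utility_mono[of y \<infinity>] by (simp add: ext_utility_simps)

lemma ext_utility_neq_PInf: "y \<noteq> \<infinity> \<Longrightarrow> ext_utility f y \<noteq> \<infinity>"
  using inf_val_le[of 1] by (cases y) (auto simp: ext_utility_def tendsto_Lim[OF _ tendsto_inf_val])

text \<open>Concavity across the boundary point \<open>0\<close>: approach it along \<open>(1 - l) r + l e\<close>, \<open>e \<rightarrow> 0\<^sup>+\<close>.\<close>

lemma concave_inf_val:
  assumes l: "0 < l" "l < 1" and r: "r > 0"
  shows "ereal l * inf_val + ereal (1 - l) * ereal (f r) \<le> ereal (f ((1 - l) * r))"
proof (cases inf_val)
  case (real c)
  have "l * c + (1 - l) * f r \<le> f ((1 - l) * r)"
  proof (rule tendsto_lowerbound)
    have "isCont f ((1 - l) * r)"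
      using continuous l r by (subst (asm) continuous_on_eq_continuous_at) auto
    moreover have "((\<lambda>e. (1 - l) * r + l * e) \<longlongrightarrow> (1 - l) * r + l * 0) (at_right 0)"
      by (intro tendsto_intros)
    ultimately show "((\<lambda>e. f ((1 - l) * r + l * e)) \<longlongrightarrow> f ((1 - l) * r)) (at_right 0)"
      using isCont_tendsto_compose by fastforce
    show "eventually (\<lambda>e. l * c + (1 - l) * f r \<le> f ((1 - l) * r + l * e)) (at_right 0)"
      using eventually_at_right_real[OF r]
    proof (rule eventually_mono)
      fix e assume e: "e \<in> {0<..<r}"
      have "l * c \<le> l * f e" using inf_val_le[of e] e real l by simp
      moreover have "(1 - (1 - l)) * f e + (1 - l) * f r \<le> f ((1 - (1 - l)) *\<^sub>R e + (1 - l) *\<^sub>R r)"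
        by (rule concave_onD[OF concave]) (use l e r in auto)
      ultimately show "l * c + (1 - l) * f r \<le> f ((1 - l) * r + l * e)"
        by (simp add: algebra_simps)
    qed
  qed simp
  then show ?thesis using real by simp
qed (use l inf_val_le[of 1] in simp_all)

lemma ext_utility_concave_nonneg:
  assumes l: "0 < l" "l < 1" and "a \<ge> 0" "b \<ge> 0"
  shows "ereal l * ext_utility f (ereal a) + ereal (1 - l) * ext_utility f (ereal b)
    \<le> ext_utility f (ereal (l * a + (1 - l) * b))"
proof -
  have l': "0 < 1 - l" "1 - l < 1" using l by auto
  consider "a = 0" "b = 0" | "a = 0" "b > 0" | "a > 0" "b = 0" | "a > 0" "b > 0"
    using assms by linarith
  then show ?thesis
  proof cases
    case 1
    then show ?thesis using ereal_convex_comb_le[OF l order_refl[of inf_val]]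
      by (simp add: ext_utility_simps zero_ereal_def[symmetric])
  next
    case 2
    then show ?thesis using concave_inf_val[OF l, of b] l
      by (simp add: ext_utility_simps zero_ereal_def[symmetric] mult.commute)
  next
    case 3
    then show ?thesis using concave_inf_val[OF l', of a] l
      by (simp add: ext_utility_simps zero_ereal_def[symmetric] mult.commute add.commute)
  next
    case 4
    have "(1 - (1 - l)) * f a + (1 - l) * f b \<le> f ((1 - (1 - l)) *\<^sub>R a + (1 - l) *\<^sub>R b)"
      by (rule concave_onD[OF concave]) (use l 4 in auto)
    moreover have "l * a + (1 - l) * b > 0" using l 4 by (simp add: add_pos_pos)
    ultimately show ?thesis using 4 by (simp add: ext_utility_simps)
  qed
qed

lemma ext_utility_concave:
  assumes l: "0 < l" "l < 1"
  shows "ereal l * ext_utility f a + ereal (1 - l) * ext_utility f b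
    \<le> ext_utility f (ereal l * a + ereal (1 - l) * b)"
proof -
  consider "a = \<infinity> \<or> b = \<infinity>" | "a \<noteq> \<infinity>" "b \<noteq> \<infinity>" "a < 0 \<or> b < 0"
    | "a \<noteq> \<infinity>" "b \<noteq> \<infinity>" "a \<ge> 0" "b \<ge> 0"
    by (metis linorder_not_le)
  then show ?thesis
  proof cases
    case 1
    then have "ereal l * a + ereal (1 - l) * b = \<infinity>" using l by auto
    then show ?thesis
      using 1 ereal_convex_comb_le[OF l ext_utility_le_sup_val]
        ereal_convex_comb_le[of "1 - l", OF _ _ ext_utility_le_sup_val] l
      by (auto simp: ext_utility_simps add.commute)
  next
    case 2
    have "ereal l * ext_utility f a \<noteq> \<infinity>" "ereal (1 - l) * ext_utility f b \<noteq> \<infinity>"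
      using 2 l ext_utility_neq_PInf by auto
    moreover have "ereal l * ext_utility f a = -\<infinity> \<or> ereal (1 - l) * ext_utility f b = -\<infinity>"
      using 2 l by (auto simp: ext_utility_simps)
    ultimately have lhs: "ereal l * ext_utility f a + ereal (1 - l) * ext_utility f b = -\<infinity>"
      by auto
    show ?thesis unfolding lhs by simp
  next
    case 3
    then obtain ra rb where "a = ereal ra" "b = ereal rb" by (cases a; cases b) auto
    then show ?thesis using ext_utility_concave_nonneg[OF l, of ra rb] 3 by simp
  qed
qed

end


lemma pos_utility_random_utility:
  assumes "random_utility Om T U" "w \<in> space (OmP Om T)"
  shows "pos_utility (U w)"
proof -
  from assms obtain U' where "concave_on {0<..} (U w)" "strict_mono_on {0<..} (U w)"
    and U': "\<forall>y>0. (U w has_real_derivative U' y) (at y)"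
    unfolding random_utility_def by blast
  moreover have "continuous_on {0<..} (U w)"
    using U' by (subst continuous_on_eq_continuous_at) (auto intro: DERIV_isCont)
  ultimately show ?thesis by (simp add: pos_utility_def)
qed

text \<open>The approximations \<open>\<lceil>n g\<rceil> / n\<close> of \<open>g\<close> take countably many values, so
  \<open>U w (\<lceil>n g w\<rceil> / n)\<close> is measurable, and it converges to \<open>U w (g w)\<close> by continuity.\<close>

lemma borel_measurable_continuous_pos_comp:
  fixes U :: "'b \<Rightarrow> real \<Rightarrow> real"
  assumes U_meas: "\<And>y. y > 0 \<Longrightarrow> (\<lambda>w. U w y) \<in> borel_measurable M"
    and U_cont: "\<And>w. w \<in> space M \<Longrightarrow> continuous_on {0<..} (U w)"
    and g: "g \<in> borel_measurable M" and g_pos: "\<And>w. w \<in> space M \<Longrightarrow> g w > 0"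
  shows "(\<lambda>w. U w (g w)) \<in> borel_measurable M"
proof (rule borel_measurable_LIMSEQ_real[where u="\<lambda>n w. U w (\<lceil>real (Suc n) * g w\<rceil> / real (Suc n))"])
  fix n
  define h where "h k w = U w (if k \<ge> 1 then real_of_int k / real (Suc n) else 1)" for k :: int and w
  have "(\<lambda>w. h k w) \<in> borel_measurable M" for k
    unfolding h_def by (rule U_meas) auto
  moreover have "(\<lambda>w. \<lceil>real (Suc n) * g w\<rceil>) \<in> measurable M (count_space UNIV)"
    using g by (intro measurable_compose[OF _ measurable_real_ceiling]) simp
  ultimately have "(\<lambda>w. h \<lceil>real (Suc n) * g w\<rceil> w) \<in> borel_measurable M"
    by (rule measurable_compose_countable)
  moreover have "h \<lceil>real (Suc n) * g w\<rceil> w = U w (\<lceil>real (Suc n) * g w\<rceil> / real (Suc n))"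
    if "w \<in> space M" for w
    using g_pos[OF that] by (simp add: h_def)
  ultimately show "(\<lambda>w. U w (\<lceil>real (Suc n) * g w\<rceil> / real (Suc n))) \<in> borel_measurable M"
    by (simp cong: measurable_cong)
next
  fix w assume w: "w \<in> space M"
  let ?x = "g w"
  have "(\<lambda>n. \<lceil>real (Suc n) * ?x\<rceil> / real (Suc n)) \<longlonglongrightarrow> ?x"
  proof (rule tendsto_sandwich[where f="\<lambda>n. ?x" and h="\<lambda>n. ?x + inverse (real (Suc n))"])
    have "?x \<le> \<lceil>real (Suc n) * ?x\<rceil> / real (Suc n)" for n
      using le_of_int_ceiling[of "real (Suc n) * ?x"] by (simp add: field_simps)
    then show "eventually (\<lambda>n. ?x \<le> \<lceil>real (Suc n) * ?x\<rceil> / real (Suc n)) sequentially"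
      by simp
    have "\<lceil>real (Suc n) * ?x\<rceil> / real (Suc n) \<le> ?x + inverse (real (Suc n))" for n
    proof -
      have "\<lceil>real (Suc n) * ?x\<rceil> / real (Suc n) \<le> (real (Suc n) * ?x + 1) / real (Suc n)"
        using of_int_ceiling_le_add_one by (rule divide_right_mono) simp
      also have "\<dots> = ?x + inverse (real (Suc n))" by (simp add: field_simps)
      finally show ?thesis .
    qed
    then show "eventually (\<lambda>n. \<lceil>real (Suc n) * ?x\<rceil> / real (Suc n) \<le> ?x + inverse (real (Suc n))) sequentially"
      by simp
    show "(\<lambda>n. ?x + inverse (real (Suc n))) \<longlonglongrightarrow> ?x"
      using tendsto_add[OF tendsto_const LIMSEQ_inverse_real_of_nat, of ?x] by simp
  qed simp
  moreover have "isCont (U w) ?x"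
    using U_cont[OF w] g_pos[OF w] by (subst (asm) continuous_on_eq_continuous_at) auto
  ultimately show "(\<lambda>n. U w (\<lceil>real (Suc n) * ?x\<rceil> / real (Suc n))) \<longlonglongrightarrow> U w ?x"
    using isCont_tendsto_compose by blast
qed

lemma borel_measurable_Uext:
  fixes U :: "(nat \<Rightarrow> 'a) \<Rightarrow> real \<Rightarrow> real" and F :: "(nat \<Rightarrow> 'a) \<Rightarrow> ereal"
  assumes U_meas: "\<And>y. y > 0 \<Longrightarrow> (\<lambda>w. U w y) \<in> borel_measurable M"
    and U_util: "\<And>w. w \<in> space M \<Longrightarrow> pos_utility (U w)"
    and F [measurable]: "F \<in> borel_measurable M"
  shows "(\<lambda>w. Uext U w (F w)) \<in> borel_measurable M"
proof -
  define g where "g w = (if 0 < F w \<and> F w < \<infinity> then real_of_ereal (F w) else 1)" for w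
  have [measurable]: "g \<in> borel_measurable M" unfolding g_def by measurable
  have g_pos: "g w > 0" for w
    unfolding g_def by (cases "F w") auto
  have [measurable]: "(\<lambda>w. U w (g w)) \<in> borel_measurable M"
    by (rule borel_measurable_continuous_pos_comp[OF U_meas _ _ g_pos])
      (auto dest: U_util simp: pos_utility_def)
  have [measurable]: "(\<lambda>w. ereal (U w (1 / real (Suc n)))) \<in> borel_measurable M"
    "(\<lambda>w. ereal (U w (real (Suc n)))) \<in> borel_measurable M" for n
    using U_meas[of "1 / real (Suc n)"] U_meas[of "real (Suc n)"] by simp_all
  have "(\<lambda>w. if F w < 0 then -\<infinity> else if F w = 0 then (INF n. ereal (U w (1 / real (Suc n))))
       else if F w = \<infinity> then (SUP n. ereal (U w (real (Suc n)))) else ereal (U w (g w)))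
    \<in> borel_measurable M"
    by measurable
  moreover have "Uext U w (F w) = (if F w < 0 then -\<infinity> else if F w = 0 then (INF n. ereal (U w (1 / real (Suc n))))
       else if F w = \<infinity> then (SUP n. ereal (U w (real (Suc n)))) else ereal (U w (g w)))"
    if w: "w \<in> space M" for w
  proof -
    interpret pos_utility "U w" by (rule U_util[OF w])
    have "ext_utility (U w) (F w) = (if F w < 0 then -\<infinity> else if F w = 0 then inf_val
       else if F w = \<infinity> then sup_val else ereal (U w (g w)))"
    proof (cases "F w")
      case (real r)
      consider "r < 0" | "r = 0" | "r > 0" by linarith
      then show ?thesis
        by cases (auto simp: ext_utility_simps g_def real zero_ereal_def[symmetric])
    qed (auto simp: ext_utility_simps g_def)
    then show ?thesis
      by (simp only: Uext_eq_ext_utility inf_val_eq_INF_nat sup_val_eq_SUP_nat)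
  qed
  ultimately show ?thesis by (simp cong: measurable_cong)
qed

subsection \<open>Expectations of extended real random variables\<close>

lemma Ex_mono:
  assumes "AE w in completion P. f w \<le> g w"
  shows "Ex P f \<le> Ex P g"
proof -
  have "AE w in completion P. e2ennreal (f w) \<le> e2ennreal (g w)"
    using assms by eventually_elim (rule e2ennreal_mono)
  then have pos: "Epos P f \<le> Epos P g" unfolding Epos_def by (rule nn_integral_mono_AE)
  have "AE w in completion P. e2ennreal (- g w) \<le> e2ennreal (- f w)"
    using assms by eventually_elim (rule e2ennreal_mono, simp)
  then have neg: "Eneg P g \<le> Eneg P f" unfolding Eneg_def by (rule nn_integral_mono_AE)
  show ?thesis
  proof (cases "Epos P f = \<infinity> \<and> Eneg P f = \<infinity>")
    case False
    show ?thesis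
    proof (cases "Epos P g = \<infinity> \<and> Eneg P g = \<infinity>")
      case True
      then have "Eneg P f = \<infinity>" using neg by (simp add: top_unique)
      then show ?thesis using False True by (cases "Epos P f") (auto simp: Ex_def)
    next
      case False': False
      have "Ex P f = enn2ereal (Epos P f) - enn2ereal (Eneg P f)"
        "Ex P g = enn2ereal (Epos P g) - enn2ereal (Eneg P g)"
        using False False' unfolding Ex_def by meson+
      moreover have "enn2ereal (Epos P f) \<le> enn2ereal (Epos P g)"
        "enn2ereal (Eneg P g) \<le> enn2ereal (Eneg P f)"
        using pos neg by (simp_all add: less_eq_ennreal.rep_eq)
      ultimately show ?thesis by (simp add: ereal_minus_mono)
    qed
  qed (simp add: Ex_def)
qed

text \<open>Stated for positive and negative parts separately, so that they stay linear and
  integrate without meeting \<open>\<infinity> - \<infinity>\<close>.\<close>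

lemma ennreal_parts_convex_comb_le:
  fixes h a b l :: real
  assumes l: "0 < l" "l < 1" and le: "l * a + (1 - l) * b \<le> h"
  shows "ennreal (- h) \<le> ennreal l * ennreal (- a) + ennreal (1 - l) * ennreal (- b)"
    and "ennreal (- h) + ennreal l * ennreal a + ennreal (1 - l) * ennreal b
         \<le> ennreal h + ennreal l * ennreal (- a) + ennreal (1 - l) * ennreal (- b)"
proof -
  have max_0: "ennreal z = ennreal (max z 0)" for z :: real
    by (cases "z \<ge> 0") (auto simp: ennreal_neg max_def)
  have nonneg: "0 \<le> l * max (- a) 0" "0 \<le> (1 - l) * max (- b) 0" using l by auto
  have "l * (- a) \<le> l * max (- a) 0" "(1 - l) * (- b) \<le> (1 - l) * max (- b) 0"
    using l by (intro mult_left_mono; simp)+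
  then have "max (- h) 0 \<le> l * max (- a) 0 + (1 - l) * max (- b) 0"
    using le nonneg by (intro max.boundedI) (auto simp: algebra_simps)
  then have "ennreal (max (- h) 0) \<le> ennreal (l * max (- a) 0 + (1 - l) * max (- b) 0)"
    by (rule ennreal_leI)
  also have "\<dots> = ennreal l * ennreal (max (- a) 0) + ennreal (1 - l) * ennreal (max (- b) 0)"
    using l nonneg by (simp add: ennreal_mult)
  finally show "ennreal (- h) \<le> ennreal l * ennreal (- a) + ennreal (1 - l) * ennreal (- b)"
    by (metis max_0)
  have "l * max a 0 = l * max (- a) 0 + l * a" "(1 - l) * max b 0 = (1 - l) * max (- b) 0 + (1 - l) * b"
    "max (- h) 0 = max h 0 - h"
    by (simp_all add: max_def algebra_simps)
  then have "max (- h) 0 + l * max a 0 + (1 - l) * max b 0 \<le> max h 0 + l * max (- a) 0 + (1 - l) * max (- b) 0"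
    using le by linarith
  then have "ennreal (max (- h) 0 + l * max a 0 + (1 - l) * max b 0)
      \<le> ennreal (max h 0 + l * max (- a) 0 + (1 - l) * max (- b) 0)"
    by (rule ennreal_leI)
  also have "\<dots> = ennreal (max h 0) + ennreal l * ennreal (max (- a) 0) + ennreal (1 - l) * ennreal (max (- b) 0)"
    using l nonneg by (simp add: ennreal_mult)
  finally have "ennreal (max (- h) 0) + ennreal l * ennreal (max a 0) + ennreal (1 - l) * ennreal (max b 0)
      \<le> ennreal (max h 0) + ennreal l * ennreal (max (- a) 0) + ennreal (1 - l) * ennreal (max (- b) 0)"
    using l by (simp add: ennreal_mult)
  then show "ennreal (- h) + ennreal l * ennreal a + ennreal (1 - l) * ennreal b
      \<le> ennreal h + ennreal l * ennreal (- a) + ennreal (1 - l) * ennreal (- b)"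
    by (metis max_0)
qed

lemma e2ennreal_parts_convex_comb_le:
  fixes a b h :: ereal
  assumes l: "0 < l" "l < 1" and le: "ereal l * a + ereal (1 - l) * b \<le> h"
  shows "e2ennreal (- h) \<le> ennreal l * e2ennreal (- a) + ennreal (1 - l) * e2ennreal (- b)"
    and "e2ennreal (- h) + ennreal l * e2ennreal a + ennreal (1 - l) * e2ennreal b
         \<le> e2ennreal h + ennreal l * e2ennreal (- a) + ennreal (1 - l) * e2ennreal (- b)"
proof -
  have l0: "ennreal l \<noteq> 0" "ennreal (1 - l) \<noteq> 0" using l by auto
  have "e2ennreal (- h) \<le> ennreal l * e2ennreal (- a) + ennreal (1 - l) * e2ennreal (- b) \<and>
    e2ennreal (- h) + ennreal l * e2ennreal a + ennreal (1 - l) * e2ennreal b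
      \<le> e2ennreal h + ennreal l * e2ennreal (- a) + ennreal (1 - l) * e2ennreal (- b)"
  proof (cases h)
    case (real rh)
    show ?thesis
    proof (cases a)
      case (real ra)
      show ?thesis
      proof (cases b)
        case (real rb)
        then show ?thesis
          using ennreal_parts_convex_comb_le[OF l, of ra rb rh] le \<open>h = ereal rh\<close> \<open>a = ereal ra\<close> by simp
      qed (use le l l0 \<open>h = ereal rh\<close> real in \<open>auto simp: ennreal_top_mult\<close>)
    qed (use le l l0 \<open>h = ereal rh\<close> in \<open>cases b; auto simp: ennreal_top_mult\<close>)+
  qed (use le l l0 in \<open>cases a; cases b; auto simp: ennreal_top_mult e2ennreal_neg\<close>)+
  then show "e2ennreal (- h) \<le> ennreal l * e2ennreal (- a) + ennreal (1 - l) * e2ennreal (- b)"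
    "e2ennreal (- h) + ennreal l * e2ennreal a + ennreal (1 - l) * e2ennreal b
      \<le> e2ennreal h + ennreal l * e2ennreal (- a) + ennreal (1 - l) * e2ennreal (- b)"
    by auto
qed

lemma Ex_convex_comb_le_of_parts:
  assumes l: "0 < l" "l < 1"
    and pos_fin: "Epos P g1 < \<infinity>" "Epos P g2 < \<infinity>"
    and neg: "Eneg P h \<le> ennreal l * Eneg P g1 + ennreal (1 - l) * Eneg P g2"
    and parts: "Eneg P h + ennreal l * Epos P g1 + ennreal (1 - l) * Epos P g2
      \<le> Epos P h + ennreal l * Eneg P g1 + ennreal (1 - l) * Eneg P g2"
  shows "ereal l * Ex P g1 + ereal (1 - l) * Ex P g2 \<le> Ex P h"
proof -
  obtain p1 p2 where p: "Epos P g1 = ennreal p1" "p1 \<ge> 0" "Epos P g2 = ennreal p2" "p2 \<ge> 0"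
    using pos_fin by (cases "Epos P g1"; cases "Epos P g2") auto
  have Ex_neq_PInf: "Ex P g1 \<noteq> \<infinity>" "Ex P g2 \<noteq> \<infinity>"
    using p by (cases "Eneg P g1"; cases "Eneg P g2"; simp add: Ex_def)+
  show ?thesis
  proof (cases "Eneg P g1 = \<infinity> \<or> Eneg P g2 = \<infinity>")
    case True
    then have "Ex P g1 = -\<infinity> \<or> Ex P g2 = -\<infinity>" using p by (auto simp: Ex_def)
    then show ?thesis using Ex_neq_PInf l
      by (cases "Ex P g1"; cases "Ex P g2") auto
  next
    case False
    then obtain n1 n2 where n: "Eneg P g1 = ennreal n1" "n1 \<ge> 0" "Eneg P g2 = ennreal n2" "n2 \<ge> 0"
      by (cases "Eneg P g1"; cases "Eneg P g2") auto
    then have "Eneg P h \<noteq> \<infinity>" using neg by (auto simp: top_unique ennreal_mult_eq_top_iff)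
    then obtain nh where nh: "Eneg P h = ennreal nh" "nh \<ge> 0" by (cases "Eneg P h") auto
    show ?thesis
    proof (cases "Epos P h")
      case (real ph)
      have "ennreal (nh + l * p1 + (1 - l) * p2) \<le> ennreal (ph + l * n1 + (1 - l) * n2)"
        using parts nh p n real l by (simp add: ennreal_mult)
      then have "nh + l * p1 + (1 - l) * p2 \<le> ph + l * n1 + (1 - l) * n2"
        using real n l by (subst (asm) ennreal_le_iff) auto
      then show ?thesis using p n nh real by (simp add: Ex_def algebra_simps)
    qed (use nh in \<open>simp add: Ex_def\<close>)
  qed
qed

lemma Ex_concave:
  assumes meas: "g1 \<in> borel_measurable (completion P)" "g2 \<in> borel_measurable (completion P)"
      "h \<in> borel_measurable (completion P)"
    and l: "0 < l" "l < 1"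
    and AE: "AE w in completion P. ereal l * g1 w + ereal (1 - l) * g2 w \<le> h w"
    and pos_fin: "Epos P g1 < \<infinity>" "Epos P g2 < \<infinity>"
  shows "ereal l * Ex P g1 + ereal (1 - l) * Ex P g2 \<le> Ex P h"
proof (rule Ex_convex_comb_le_of_parts[OF l pos_fin])
  let ?N = "completion P"
  have [measurable]: "g1 \<in> borel_measurable ?N" "g2 \<in> borel_measurable ?N" "h \<in> borel_measurable ?N"
    using meas by auto
  have "AE w in ?N. e2ennreal (- h w) \<le> ennreal l * e2ennreal (- g1 w) + ennreal (1 - l) * e2ennreal (- g2 w)"
    using AE by eventually_elim (rule e2ennreal_parts_convex_comb_le(1)[OF l])
  then have "Eneg P h \<le> (\<integral>\<^sup>+ w. ennreal l * e2ennreal (- g1 w) + ennreal (1 - l) * e2ennreal (- g2 w) \<partial>?N)"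
    unfolding Eneg_def by (rule nn_integral_mono_AE)
  also have "\<dots> = ennreal l * Eneg P g1 + ennreal (1 - l) * Eneg P g2"
    unfolding Eneg_def by (simp add: nn_integral_add nn_integral_cmult)
  finally show "Eneg P h \<le> ennreal l * Eneg P g1 + ennreal (1 - l) * Eneg P g2" .
  have "Eneg P h + ennreal l * Epos P g1 + ennreal (1 - l) * Epos P g2
      = (\<integral>\<^sup>+ w. e2ennreal (- h w) + ennreal l * e2ennreal (g1 w) + ennreal (1 - l) * e2ennreal (g2 w) \<partial>?N)"
    unfolding Eneg_def Epos_def by (simp add: nn_integral_add nn_integral_cmult add.assoc)
  also have "\<dots> \<le> (\<integral>\<^sup>+ w. e2ennreal (h w) + ennreal l * e2ennreal (- g1 w) + ennreal (1 - l) * e2ennreal (- g2 w) \<partial>?N)"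
  proof (rule nn_integral_mono_AE)
    show "AE w in ?N. e2ennreal (- h w) + ennreal l * e2ennreal (g1 w) + ennreal (1 - l) * e2ennreal (g2 w)
        \<le> e2ennreal (h w) + ennreal l * e2ennreal (- g1 w) + ennreal (1 - l) * e2ennreal (- g2 w)"
      using AE by eventually_elim (rule e2ennreal_parts_convex_comb_le(2)[OF l])
  qed
  also have "\<dots> = Epos P h + ennreal l * Eneg P g1 + ennreal (1 - l) * Eneg P g2"
    unfolding Eneg_def Epos_def by (simp add: nn_integral_add nn_integral_cmult add.assoc)
  finally show "Eneg P h + ennreal l * Epos P g1 + ennreal (1 - l) * Epos P g2
      \<le> Epos P h + ennreal l * Eneg P g1 + ennreal (1 - l) * Eneg P g2" .
qed

lemma VT_add_capital: "VT T S (x + c) \<phi> w = c + VT T S x \<phi> w"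
  by (simp add: VT_def)

lemma AG_add_capital: "AG Om T Qs S G (x + c) = AG Om T Qs S (\<lambda>w. G w - ereal c) x"
proof -
  have "(G w - ereal c \<le> ereal (VT T S x \<phi> w)) \<longleftrightarrow> (G w \<le> ereal (VT T S (x + c) \<phi> w))" for w \<phi>
    by (cases "G w") (auto simp: VT_add_capital)
  then show ?thesis by (simp add: AG_def)
qed

lemma ereal_VT_minus_add_capital:
  "ereal (VT T S x \<phi> w) - (G w - ereal c) = ereal (VT T S (x + c) \<phi> w) - G w"
  by (cases "G w") (auto simp: VT_add_capital)

lemma AUG_add_capital: "AUG Om T Qs S U G (x + c) = AUG Om T Qs S U (\<lambda>w. G w - ereal c) x"
  by (simp add: AUG_def AG_add_capital ereal_VT_minus_add_capital)

lemma uval_add_capital: "uval Om T Qs S U G (x + c) = uval Om T Qs S U (\<lambda>w. G w - ereal c) x"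
  by (simp add: uval_def AUG_add_capital ereal_VT_minus_add_capital)

lemma W0_minus_const: "G \<in> W0 Om T \<Longrightarrow> (\<lambda>w. G w - ereal c) \<in> W0 Om T"
  by (simp add: W0_def)

lemma W0_uminus: "G \<in> W0 Om T \<Longrightarrow> (\<lambda>w. - G w) \<in> W0 Om T"
  by (simp add: W0_def)

lemma AUG_eq_AG_all_capitals:
  assumes "\<forall>G\<in>W0 Om T. AUG Om T Qs S U G x = AG Om T Qs S G x"
  shows "\<forall>G\<in>W0 Om T. \<forall>y. AUG Om T Qs S U G y = AG Om T Qs S G y"
proof (intro ballI allI)
  fix G y assume "G \<in> W0 Om T"
  have "AUG Om T Qs S U G (x + (y - x)) = AG Om T Qs S G (x + (y - x))"
    unfolding AUG_add_capital AG_add_capital using assms W0_minus_const[OF \<open>G \<in> W0 Om T\<close>] by blast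
  then show "AUG Om T Qs S U G y = AG Om T Qs S G y" by simp
qed

lemma Strat_convex_comb:
  assumes "\<phi>1 \<in> Strat Om T" "\<phi>2 \<in> Strat Om T"
  shows "(\<lambda>t w. l *\<^sub>R \<phi>1 t w + (1 - l) *\<^sub>R \<phi>2 t w) \<in> Strat Om T"
  using assms unfolding Strat_def by (auto intro!: borel_measurable_add borel_measurable_scaleR)

lemma VT_convex_comb:
  "VT T S (l * x1 + (1 - l) * x2) (\<lambda>t w. l *\<^sub>R \<phi>1 t w + (1 - l) *\<^sub>R \<phi>2 t w) w
    = l * VT T S x1 \<phi>1 w + (1 - l) * VT T S x2 \<phi>2 w"
proof -
  define D where "D s = S s (restrict w {1..s}) - S (s - 1) (restrict w {1..s - 1})" for s
  define A where "A \<phi> = (\<Sum>s=1..T. inner (\<phi> s (restrict w {1..s - 1})) (D s))" for \<phi>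
  have VT_eq: "VT T S y \<phi> w = y + A \<phi>" for y \<phi> unfolding VT_def A_def D_def ..
  have "A (\<lambda>t w. l *\<^sub>R \<phi>1 t w + (1 - l) *\<^sub>R \<phi>2 t w) = l * A \<phi>1 + (1 - l) * A \<phi>2"
    unfolding A_def by (simp add: inner_add_left sum.distrib sum_distrib_left)
  then show ?thesis unfolding VT_eq by (simp add: algebra_simps)
qed

lemma borel_measurable_VT:
  assumes S_meas: "\<forall>t\<in>{0..T}. S t \<in> borel_measurable (univ (OmP Om t))"
    and \<phi>: "\<phi> \<in> Strat Om T"
  shows "(\<lambda>w. VT T S x \<phi> w) \<in> borel_measurable (univ (OmP Om T))"
proof -
  have past: "(\<lambda>w. F (restrict w {1..s})) \<in> borel_measurable (univ (OmP Om T))"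
    if "s \<le> T" "F \<in> borel_measurable (univ (OmP Om s))" for s and F :: "_ \<Rightarrow> 'e::euclidean_space"
  proof (rule measurable_univ_comp[OF _ that(2)])
    show "(\<lambda>w. restrict w {1..s}) \<in> measurable (OmP Om T) (OmP Om s)"
      using that(1) unfolding OmP_def by (intro measurable_restrict_subset) auto
  qed
  have "(\<lambda>w. \<phi> s (restrict w {1..s - 1})) \<in> borel_measurable (univ (OmP Om T))" if "s \<in> {1..T}" for s
    using that \<phi> by (intro past) (auto simp: Strat_def)
  moreover have "(\<lambda>w. S s (restrict w {1..s})) \<in> borel_measurable (univ (OmP Om T))" if "s \<le> T" for s
    using that S_meas by (intro past) auto
  ultimately show ?thesis
    unfolding VT_def by (auto intro!: borel_measurable_add borel_measurable_sum borel_measurable_inner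
        borel_measurable_diff)
qed

lemma borel_measurable_Uext_wealth:
  assumes S_meas: "\<forall>t\<in>{0..T}. S t \<in> borel_measurable (univ (OmP Om t))"
    and U_util: "random_utility Om T U"
    and \<phi>: "\<phi> \<in> Strat Om T" and G: "G \<in> W0 Om T" and P: "P \<in> QT Om T Qs"
  shows "(\<lambda>w. Uext U w (ereal (VT T S x \<phi> w) - G w)) \<in> borel_measurable (completion P)"
proof (rule measurable_univ_completion_QT[OF P], rule borel_measurable_Uext)
  show "(\<lambda>w. U w y) \<in> borel_measurable (univ (OmP Om T))" if "y > 0" for y
    using U_util that by (simp add: random_utility_def)
  show "pos_utility (U w)" if "w \<in> space (univ (OmP Om T))" for w
    using pos_utility_random_utility[OF U_util] that by simp
  show "(\<lambda>w. ereal (VT T S x \<phi> w) - G w) \<in> borel_measurable (univ (OmP Om T))"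
    using borel_measurable_VT[OF S_meas \<phi>] G by (simp add: W0_def)
qed

subsection \<open>Monotonicity and cash invariance of the indifference price\<close>

lemma AG_antimono:
  assumes "qs (QT Om T Qs) (\<lambda>w. G2 w \<le> G1 w)"
  shows "AG Om T Qs S G1 y \<subseteq> AG Om T Qs S G2 y"
proof
  fix \<phi> assume "\<phi> \<in> AG Om T Qs S G1 y"
  then have "\<phi> \<in> Strat Om T" "qs (QT Om T Qs) (\<lambda>w. G1 w \<le> ereal (VT T S y \<phi> w))"
    by (auto simp: AG_def)
  moreover have "qs (QT Om T Qs) (\<lambda>w. G2 w \<le> ereal (VT T S y \<phi> w))"
    using assms calculation(2) unfolding qs_def
  proof (intro ballI)
    fix P assume "\<forall>P\<in>QT Om T Qs. AE w in completion P. G2 w \<le> G1 w"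
      "\<forall>P\<in>QT Om T Qs. AE w in completion P. G1 w \<le> ereal (VT T S y \<phi> w)" "P \<in> QT Om T Qs"
    then have "AE w in completion P. G2 w \<le> G1 w" "AE w in completion P. G1 w \<le> ereal (VT T S y \<phi> w)"
      by auto
    then show "AE w in completion P. G2 w \<le> ereal (VT T S y \<phi> w)"
      by eventually_elim (rule order_trans)
  qed
  ultimately show "\<phi> \<in> AG Om T Qs S G2 y" by (simp add: AG_def)
qed

lemma uval_antimono:
  assumes A_eq: "\<forall>G\<in>W0 Om T. \<forall>y. AUG Om T Qs S U G y = AG Om T Qs S G y"
    and U_util: "random_utility Om T U"
    and G: "G1 \<in> W0 Om T" "G2 \<in> W0 Om T"
    and le: "qs (QT Om T Qs) (\<lambda>w. G2 w \<le> G1 w)"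
  shows "uval Om T Qs S U G1 y \<le> uval Om T Qs S U G2 y"
  unfolding uval_def
proof (rule SUP_mono)
  fix \<phi> assume "\<phi> \<in> AUG Om T Qs S U G1 y"
  then have \<phi>: "\<phi> \<in> AUG Om T Qs S U G2 y" using AG_antimono[OF le] A_eq G by auto
  have "Ex P (\<lambda>w. Uext U w (ereal (VT T S y \<phi> w) - G1 w))
      \<le> Ex P (\<lambda>w. Uext U w (ereal (VT T S y \<phi> w) - G2 w))" if P: "P \<in> QT Om T Qs" for P
  proof (rule Ex_mono)
    have "AE w in completion P. w \<in> space (OmP Om T) \<and> G2 w \<le> G1 w"
      using le P space_QT[OF P] by (auto simp: qs_def)
    then show "AE w in completion P. Uext U w (ereal (VT T S y \<phi> w) - G1 w)
        \<le> Uext U w (ereal (VT T S y \<phi> w) - G2 w)"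
    proof eventually_elim
      case (elim w)
      interpret pos_utility "U w" using pos_utility_random_utility[OF U_util] elim by simp
      show ?case
        unfolding Uext_eq_ext_utility using elim by (intro ext_utility_mono ereal_minus_mono) auto
    qed
  qed
  then show "\<exists>\<phi>'\<in>AUG Om T Qs S U G2 y. (INF P\<in>QT Om T Qs. Ex P (\<lambda>w. Uext U w (ereal (VT T S y \<phi> w) - G1 w)))
      \<le> (INF P\<in>QT Om T Qs. Ex P (\<lambda>w. Uext U w (ereal (VT T S y \<phi>' w) - G2 w)))"
    using \<phi> by (blast intro: INF_mono)
qed

lemma pval_antimono:
  assumes "\<And>y. uval Om T Qs S U G1 y \<le> uval Om T Qs S U G2 y"
  shows "pval Om T Qs S U G2 x \<le> pval Om T Qs S U G1 x"
  unfolding pval_def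
  by (rule Inf_superset_mono, rule image_mono) (auto intro: order_trans assms)

lemma Inf_ereal_minus_real:
  fixes B :: "ereal set"
  shows "Inf ((\<lambda>e. e - ereal m) ` B) = Inf B - ereal m"
proof -
  have cancel: "(a + ereal m) - ereal m = a" "(a - ereal m) + ereal m = a" for a
    by (cases a; simp)+
  show ?thesis
  proof (rule antisym)
    let ?a = "Inf ((\<lambda>e. e - ereal m) ` B)"
    have "?a + ereal m \<le> Inf B"
    proof (rule Inf_greatest)
      fix e assume "e \<in> B"
      then have "?a + ereal m \<le> (e - ereal m) + ereal m" by (auto intro: add_right_mono Inf_lower)
      then show "?a + ereal m \<le> e" by (simp only: cancel)
    qed
    then have "(?a + ereal m) - ereal m \<le> Inf B - ereal m" by (rule ereal_minus_mono) simp
    then show "?a \<le> Inf B - ereal m" by (simp only: cancel)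
  next
    show "Inf B - ereal m \<le> Inf ((\<lambda>e. e - ereal m) ` B)"
      by (rule Inf_greatest) (auto intro: ereal_minus_mono Inf_lower)
  qed
qed

lemma pval_add_cash:
  "pval Om T Qs S U (\<lambda>w. - (G w + ereal m)) x = pval Om T Qs S U (\<lambda>w. - G w) x - ereal m"
proof -
  let ?u0 = "uval Om T Qs S U (\<lambda>_. 0) x"
  let ?A = "{z. ?u0 \<le> uval Om T Qs S U (\<lambda>w. - G w) (x + z)}"
  have "(\<lambda>w. - (G w + ereal m)) = (\<lambda>w. - G w - ereal m)"
  proof
    fix w show "- (G w + ereal m) = - G w - ereal m" by (cases "G w") auto
  qed
  then have "uval Om T Qs S U (\<lambda>w. - (G w + ereal m)) (x + z) = uval Om T Qs S U (\<lambda>w. - G w) (x + (z + m))" for z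
    using uval_add_capital[of Om T Qs S U "\<lambda>w. - G w" "x + z" m] by (simp add: add.assoc)
  then have "{z. ?u0 \<le> uval Om T Qs S U (\<lambda>w. - (G w + ereal m)) (x + z)} = (\<lambda>z. z - m) ` ?A"
    by (auto intro: rev_image_eqI[of "_ + m"])
  moreover have "ereal ` ((\<lambda>z. z - m) ` ?A) = (\<lambda>e. e - ereal m) ` (ereal ` ?A)"
    by (auto simp: image_image)
  ultimately show ?thesis unfolding pval_def by (simp only: Inf_ereal_minus_real)
qed

lemma monetary_risk_pval:
  assumes A_eq: "\<forall>G\<in>W0 Om T. \<forall>y. AUG Om T Qs S U G y = AG Om T Qs S G y"
    and U_util: "random_utility Om T U" and X: "X \<subseteq> W0 Om T"
  shows "monetary_risk (QT Om T Qs) X (\<lambda>G. pval Om T Qs S U (\<lambda>w. - G w) x)"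
  unfolding monetary_risk_def
proof (intro conjI ballI allI impI)
  fix G H assume "G \<in> X" "H \<in> X" and "qs (QT Om T Qs) (\<lambda>w. H w \<le> G w)"
  then have "uval Om T Qs S U (\<lambda>w. - H w) y \<le> uval Om T Qs S U (\<lambda>w. - G w) y" for y
    using X by (intro uval_antimono[OF A_eq U_util] W0_uminus) (auto simp: qs_def)
  then show "pval Om T Qs S U (\<lambda>w. - G w) x \<le> pval Om T Qs S U (\<lambda>w. - H w) x"
    by (rule pval_antimono)
qed (rule pval_add_cash)

subsection \<open>Convexity of the indifference price\<close>

lemma ereal_uminus_convex_comb_le:
  fixes g h :: ereal
  assumes l: "0 < l" "l < 1" and "- g \<le> ereal a" "- h \<le> ereal b"
  shows "- (ereal l * g + ereal (1 - l) * h) \<le> ereal (l * a + (1 - l) * b)"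
proof (cases g)
  case (real rg)
  show ?thesis
  proof (cases h)
    case (real rh)
    have "l * (- rg) \<le> l * a" "(1 - l) * (- rh) \<le> (1 - l) * b"
      using assms \<open>g = ereal rg\<close> real by (intro mult_left_mono; simp)+
    then show ?thesis using \<open>g = ereal rg\<close> real by (simp add: algebra_simps)
  qed (use assms \<open>g = ereal rg\<close> in auto)
qed (use assms in auto)

lemma ereal_minus_uminus_convex_comb:
  fixes g h :: ereal
  assumes "0 < l" "l < 1"
  shows "ereal l * (ereal a - - g) + ereal (1 - l) * (ereal b - - h)
    = ereal (l * a + (1 - l) * b) - - (ereal l * g + ereal (1 - l) * h)"
  using assms by (cases g; cases h) (auto simp: algebra_simps)

lemma AG_convex_comb:
  assumes l: "0 < l" "l < 1"
    and "\<phi>1 \<in> AG Om T Qs S (\<lambda>w. - G w) y1" "\<phi>2 \<in> AG Om T Qs S (\<lambda>w. - H w) y2"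
  shows "(\<lambda>t w. l *\<^sub>R \<phi>1 t w + (1 - l) *\<^sub>R \<phi>2 t w)
    \<in> AG Om T Qs S (\<lambda>w. - (ereal l * G w + ereal (1 - l) * H w)) (l * y1 + (1 - l) * y2)"
  unfolding AG_def qs_def
proof (intro CollectI conjI ballI Strat_convex_comb)
  show "\<phi>1 \<in> Strat Om T" "\<phi>2 \<in> Strat Om T" using assms by (auto simp: AG_def)
  fix P assume "P \<in> QT Om T Qs"
  then have "AE w in completion P. - G w \<le> ereal (VT T S y1 \<phi>1 w)"
    "AE w in completion P. - H w \<le> ereal (VT T S y2 \<phi>2 w)"
    using assms by (auto simp: AG_def qs_def)
  then show "AE w in completion P. - (ereal l * G w + ereal (1 - l) * H w)
      \<le> ereal (VT T S (l * y1 + (1 - l) * y2) (\<lambda>t w. l *\<^sub>R \<phi>1 t w + (1 - l) *\<^sub>R \<phi>2 t w) w)"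
    by eventually_elim (simp only: VT_convex_comb, rule ereal_uminus_convex_comb_le[OF l])
qed

lemma Ex_Uext_wealth_convex_comb:
  assumes S_meas: "\<forall>t\<in>{0..T}. S t \<in> borel_measurable (univ (OmP Om t))"
    and U_util: "random_utility Om T U"
    and W0: "G \<in> W0 Om T" "H \<in> W0 Om T" "(\<lambda>w. ereal l * G w + ereal (1 - l) * H w) \<in> W0 Om T"
    and l: "0 < l" "l < 1" and P: "P \<in> QT Om T Qs"
    and \<phi>: "\<phi>1 \<in> Strat Om T" "\<phi>2 \<in> Strat Om T"
    and fin: "Epos P (\<lambda>w. Uext U w (ereal (VT T S y1 \<phi>1 w) - - G w)) < \<infinity>"
      "Epos P (\<lambda>w. Uext U w (ereal (VT T S y2 \<phi>2 w) - - H w)) < \<infinity>"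
  shows "ereal l * Ex P (\<lambda>w. Uext U w (ereal (VT T S y1 \<phi>1 w) - - G w))
      + ereal (1 - l) * Ex P (\<lambda>w. Uext U w (ereal (VT T S y2 \<phi>2 w) - - H w))
    \<le> Ex P (\<lambda>w. Uext U w (ereal (VT T S (l * y1 + (1 - l) * y2) (\<lambda>t w. l *\<^sub>R \<phi>1 t w + (1 - l) *\<^sub>R \<phi>2 t w) w)
      - - (ereal l * G w + ereal (1 - l) * H w)))"
proof (rule Ex_concave[OF _ _ _ l _ fin])
  show "AE w in completion P. ereal l * Uext U w (ereal (VT T S y1 \<phi>1 w) - - G w)
      + ereal (1 - l) * Uext U w (ereal (VT T S y2 \<phi>2 w) - - H w)
    \<le> Uext U w (ereal (VT T S (l * y1 + (1 - l) * y2) (\<lambda>t w. l *\<^sub>R \<phi>1 t w + (1 - l) *\<^sub>R \<phi>2 t w) w)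
      - - (ereal l * G w + ereal (1 - l) * H w))"
  proof (rule AE_I2)
    fix w assume "w \<in> space (completion P)"
    then interpret pos_utility "U w"
      using pos_utility_random_utility[OF U_util] space_QT[OF P] by simp
    show "ereal l * Uext U w (ereal (VT T S y1 \<phi>1 w) - - G w)
        + ereal (1 - l) * Uext U w (ereal (VT T S y2 \<phi>2 w) - - H w)
      \<le> Uext U w (ereal (VT T S (l * y1 + (1 - l) * y2) (\<lambda>t w. l *\<^sub>R \<phi>1 t w + (1 - l) *\<^sub>R \<phi>2 t w) w)
        - - (ereal l * G w + ereal (1 - l) * H w))"
      unfolding Uext_eq_ext_utility VT_convex_comb ereal_minus_uminus_convex_comb[OF l, symmetric]
      by (rule ext_utility_concave[OF l])
  qed
qed (use borel_measurable_Uext_wealth[OF S_meas U_util] Strat_convex_comb \<phi> W0_uminus W0 P in blast)+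

lemma uval_quasiconcave:
  assumes A_eq: "\<forall>G\<in>W0 Om T. \<forall>y. AUG Om T Qs S U G y = AG Om T Qs S G y"
    and U_util: "random_utility Om T U"
    and S_meas: "\<forall>t\<in>{0..T}. S t \<in> borel_measurable (univ (OmP Om t))"
    and W0: "G \<in> W0 Om T" "H \<in> W0 Om T" "(\<lambda>w. ereal l * G w + ereal (1 - l) * H w) \<in> W0 Om T"
    and l: "0 < l" "l < 1"
  shows "min (uval Om T Qs S U (\<lambda>w. - G w) y1) (uval Om T Qs S U (\<lambda>w. - H w) y2)
    \<le> uval Om T Qs S U (\<lambda>w. - (ereal l * G w + ereal (1 - l) * H w)) (l * y1 + (1 - l) * y2)"
proof (rule dense_le)
  let ?K = "\<lambda>w. ereal l * G w + ereal (1 - l) * H w"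
  fix c assume c: "c < min (uval Om T Qs S U (\<lambda>w. - G w) y1) (uval Om T Qs S U (\<lambda>w. - H w) y2)"
  have "c < uval Om T Qs S U (\<lambda>w. - G w) y1" "c < uval Om T Qs S U (\<lambda>w. - H w) y2"
    using c by auto
  then obtain \<phi>1 \<phi>2 where \<phi>1: "\<phi>1 \<in> AUG Om T Qs S U (\<lambda>w. - G w) y1"
    and c1: "c < (INF P\<in>QT Om T Qs. Ex P (\<lambda>w. Uext U w (ereal (VT T S y1 \<phi>1 w) - - G w)))"
    and \<phi>2: "\<phi>2 \<in> AUG Om T Qs S U (\<lambda>w. - H w) y2"
    and c2: "c < (INF P\<in>QT Om T Qs. Ex P (\<lambda>w. Uext U w (ereal (VT T S y2 \<phi>2 w) - - H w)))"
    unfolding uval_def less_SUP_iff by blast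
  let ?\<phi> = "\<lambda>t w. l *\<^sub>R \<phi>1 t w + (1 - l) *\<^sub>R \<phi>2 t w"
  have "\<phi>1 \<in> AG Om T Qs S (\<lambda>w. - G w) y1" "\<phi>2 \<in> AG Om T Qs S (\<lambda>w. - H w) y2"
    using \<phi>1 \<phi>2 by (simp_all add: AUG_def)
  then have "?\<phi> \<in> AG Om T Qs S (\<lambda>w. - ?K w) (l * y1 + (1 - l) * y2)"
    by (rule AG_convex_comb[OF l])
  then have "?\<phi> \<in> AUG Om T Qs S U (\<lambda>w. - ?K w) (l * y1 + (1 - l) * y2)"
    using A_eq W0_uminus[OF W0(3)] by blast
  moreover have "c \<le> Ex P (\<lambda>w. Uext U w (ereal (VT T S (l * y1 + (1 - l) * y2) ?\<phi> w) - - ?K w))"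
    if P: "P \<in> QT Om T Qs" for P
  proof -
    have "c = ereal l * c + ereal (1 - l) * c"
      using l by (cases c) (auto simp: algebra_simps)
    also have "\<dots> \<le> ereal l * Ex P (\<lambda>w. Uext U w (ereal (VT T S y1 \<phi>1 w) - - G w))
        + ereal (1 - l) * Ex P (\<lambda>w. Uext U w (ereal (VT T S y2 \<phi>2 w) - - H w))"
      using less_INF_D[OF c1 P] less_INF_D[OF c2 P] l
      by (intro add_mono ereal_mult_left_mono) auto
    also have "\<dots> \<le> Ex P (\<lambda>w. Uext U w (ereal (VT T S (l * y1 + (1 - l) * y2) ?\<phi> w) - - ?K w))"
      using \<phi>1 \<phi>2 P by (intro Ex_Uext_wealth_convex_comb[OF S_meas U_util W0 l P]) (auto simp: AUG_def AG_def)
    finally show ?thesis .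
  qed
  ultimately show "c \<le> uval Om T Qs S U (\<lambda>w. - ?K w) (l * y1 + (1 - l) * y2)"
    unfolding uval_def by (blast intro: SUP_upper2 INF_greatest)
qed

lemma exists_convex_comb_less:
  fixes A1 A2 :: "real set"
  assumes l: "0 < l" "l < 1" and a: "a1 \<in> A1" "a2 \<in> A2"
    and less: "ereal l * Inf (ereal ` A1) + ereal (1 - l) * Inf (ereal ` A2) < ereal r"
  shows "\<exists>z1\<in>A1. \<exists>z2\<in>A2. l * z1 + (1 - l) * z2 < r"
proof -
  have witness: "\<exists>z\<in>A. z < b" if "Inf (ereal ` A) < ereal b" for A b
    using that by (auto simp: Inf_less_iff)
  have I_le: "Inf (ereal ` A1) \<le> ereal a1" "Inf (ereal ` A2) \<le> ereal a2"
    using a by (auto intro: Inf_lower)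
  show ?thesis
  proof (cases "Inf (ereal ` A1)")
    case MInf
    then obtain z1 where "z1 \<in> A1" "z1 < (r - (1 - l) * a2) / l"
      using witness[of A1 "(r - (1 - l) * a2) / l"] by auto
    then show ?thesis using a l by (intro bexI[of _ z1] bexI[of _ a2]) (auto simp: field_simps)
  next
    case (real i1)
    show ?thesis
    proof (cases "Inf (ereal ` A2)")
      case MInf
      then obtain z2 where "z2 \<in> A2" "z2 < (r - l * a1) / (1 - l)"
        using witness[of A2 "(r - l * a1) / (1 - l)"] by auto
      then show ?thesis using a l by (intro bexI[of _ a1] bexI[of _ z2]) (auto simp: field_simps)
    next
      case (real i2)
      define d where "d = r - (l * i1 + (1 - l) * i2)"
      have "d > 0" using less \<open>Inf (ereal ` A1) = ereal i1\<close> real by (simp add: d_def)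
      then obtain z1 z2 where z: "z1 \<in> A1" "z1 < i1 + d" "z2 \<in> A2" "z2 < i2 + d"
        using witness[of A1 "i1 + d"] witness[of A2 "i2 + d"] \<open>Inf (ereal ` A1) = ereal i1\<close> real
        by auto
      have "l * z1 + (1 - l) * z2 < l * (i1 + d) + (1 - l) * (i2 + d)"
        using z l by (intro add_strict_mono mult_strict_left_mono) auto
      also have "\<dots> = r" by (simp add: d_def algebra_simps)
      finally show ?thesis using z by blast
    qed (use I_le in simp)
  qed (use I_le in simp)
qed

lemma Inf_convex_comb_le:
  fixes A1 A2 AK :: "real set"
  assumes l: "0 < l" "l < 1"
    and comb: "\<And>z1 z2. z1 \<in> A1 \<Longrightarrow> z2 \<in> A2 \<Longrightarrow> l * z1 + (1 - l) * z2 \<in> AK"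
  shows "Inf (ereal ` AK) \<le> ereal l * Inf (ereal ` A1) + ereal (1 - l) * Inf (ereal ` A2)"
proof (cases "A1 = {} \<or> A2 = {}")
  case True
  then show ?thesis using l by (auto simp: top_ereal_def)
next
  case False
  then obtain a1 a2 where a: "a1 \<in> A1" "a2 \<in> A2" by auto
  show ?thesis
  proof (rule ccontr)
    assume "\<not> ?thesis"
    then obtain r where r: "ereal l * Inf (ereal ` A1) + ereal (1 - l) * Inf (ereal ` A2) < ereal r"
      "ereal r < Inf (ereal ` AK)"
      using ereal_dense2 by (meson not_le)
    then obtain z1 z2 where "z1 \<in> A1" "z2 \<in> A2" "l * z1 + (1 - l) * z2 < r"
      using exists_convex_comb_less[OF l a] by blast
    then have "Inf (ereal ` AK) < ereal r"
      using comb by (intro le_less_trans[OF Inf_lower]) auto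
    with r show False by simp
  qed
qed

lemma pval_convex:
  assumes A_eq: "\<forall>G\<in>W0 Om T. \<forall>y. AUG Om T Qs S U G y = AG Om T Qs S G y"
    and U_util: "random_utility Om T U"
    and S_meas: "\<forall>t\<in>{0..T}. S t \<in> borel_measurable (univ (OmP Om t))"
    and W0: "G \<in> W0 Om T" "H \<in> W0 Om T" "(\<lambda>w. ereal l * G w + ereal (1 - l) * H w) \<in> W0 Om T"
    and l: "0 < l" "l < 1"
  shows "pval Om T Qs S U (\<lambda>w. - (ereal l * G w + ereal (1 - l) * H w)) x
    \<le> ereal l * pval Om T Qs S U (\<lambda>w. - G w) x + ereal (1 - l) * pval Om T Qs S U (\<lambda>w. - H w) x"
  unfolding pval_def
proof (rule Inf_convex_comb_le[OF l], safe)
  let ?u0 = "uval Om T Qs S U (\<lambda>_. 0) x"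
  fix z1 z2
  assume "?u0 \<le> uval Om T Qs S U (\<lambda>w. - G w) (x + z1)" "?u0 \<le> uval Om T Qs S U (\<lambda>w. - H w) (x + z2)"
  then have "?u0 \<le> min (uval Om T Qs S U (\<lambda>w. - G w) (x + z1)) (uval Om T Qs S U (\<lambda>w. - H w) (x + z2))"
    by simp
  also have "\<dots> \<le> uval Om T Qs S U (\<lambda>w. - (ereal l * G w + ereal (1 - l) * H w))
      (l * (x + z1) + (1 - l) * (x + z2))"
    by (rule uval_quasiconcave[OF A_eq U_util S_meas W0 l])
  also have "l * (x + z1) + (1 - l) * (x + z2) = x + (l * z1 + (1 - l) * z2)"
    by (simp add: algebra_simps)
  finally show "?u0 \<le> uval Om T Qs S U (\<lambda>w. - (ereal l * G w + ereal (1 - l) * H w))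
      (x + (l * z1 + (1 - l) * z2))" .
qed

lemma convex_risk_pval:
  assumes A_eq: "\<forall>G\<in>W0 Om T. \<forall>y. AUG Om T Qs S U G y = AG Om T Qs S G y"
    and U_util: "random_utility Om T U"
    and S_meas: "\<forall>t\<in>{0..T}. S t \<in> borel_measurable (univ (OmP Om t))"
    and X: "X \<subseteq> W0 Om T"
  shows "convex_risk (QT Om T Qs) X (\<lambda>G. pval Om T Qs S U (\<lambda>w. - G w) x)"
  unfolding convex_risk_def
proof (intro conjI ballI impI monetary_risk_pval[OF A_eq U_util X])
  fix G H l
  assume GHK: "G \<in> X" "H \<in> X" "(\<lambda>w. ereal l * G w + ereal (1 - l) * H w) \<in> X"
    and "l \<in> {0..1::real}"
  then consider "l = 0" | "l = 1" | "0 < l" "l < 1" by fastforce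
  then show "pval Om T Qs S U (\<lambda>w. - (ereal l * G w + ereal (1 - l) * H w)) x
    \<le> ereal l * pval Om T Qs S U (\<lambda>w. - G w) x + ereal (1 - l) * pval Om T Qs S U (\<lambda>w. - H w) x"
  proof cases
    case 3
    then show ?thesis using GHK X by (intro pval_convex[OF A_eq U_util S_meas]) auto
  qed (simp_all add: zero_ereal_def[symmetric] one_ereal_def[symmetric])
qed

lemma pval_zero_eq_0:
  assumes "\<forall>\<delta>>0. uval Om T Qs S U (\<lambda>_. 0) (x - \<delta>) < uval Om T Qs S U (\<lambda>_. 0) x"
  shows "pval Om T Qs S U (\<lambda>_. 0) x = 0"
proof -
  let ?A = "{z. uval Om T Qs S U (\<lambda>_. 0) x \<le> uval Om T Qs S U (\<lambda>_. 0) (x + z)}"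
  have "z \<ge> 0" if "z \<in> ?A" for z
    using that assms[rule_format, of "- z"] by (cases "z < 0") auto
  moreover have "0 \<in> ?A" by simp
  ultimately have "Inf (ereal ` ?A) = 0"
    by (intro antisym Inf_greatest) (auto intro: Inf_lower2[of 0] simp: zero_ereal_def)
  then show ?thesis by (simp add: pval_def)
qed

text \<open>Only the hypotheses on \<open>S\<close>, \<open>U\<close> and \<open>\<A>(U,G,x) = \<A>(G,x)\<close> are used: convexity and
  normalisation hold without no-arbitrage, Borel measurability of \<open>S\<close> or finiteness of
  \<open>u(0,x)\<close>.\<close>

theorem proposition2p17:
  fixes Om :: "nat \<Rightarrow> 'a::polish_space set"
    and T :: nat
    and Qs :: "nat \<Rightarrow> (nat \<Rightarrow> 'a) \<Rightarrow> 'a measure set"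
    and S :: "nat \<Rightarrow> (nat \<Rightarrow> 'a) \<Rightarrow> 'd::euclidean_space"
    and U :: "(nat \<Rightarrow> 'a) \<Rightarrow> real \<Rightarrow> real"
    and x :: real
  assumes T1: "T \<ge> 1"
    and Om_closed: "\<forall>t\<in>{1..T}. closed (Om t)"
    and Qs_probs: "\<forall>t\<in>{1..T}. \<forall>w\<in>space (OmP Om (t - 1)). Qs t w \<subseteq> probs (OmS Om t)"
    and S_meas: "\<forall>t\<in>{0..T}. S t \<in> borel_measurable (univ (OmP Om t))"
    and U_util: "random_utility Om T U"
    and x_nonneg: "x \<ge> 0"
    and A_eq: "\<forall>G\<in>W0 Om T. AUG Om T Qs S U G x = AG Om T Qs S G x"
  shows "monetary_risk (QT Om T Qs) (W0 Om T) (\<lambda>G. pval Om T Qs S U (\<lambda>w. - G w) x)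
    \<and> ((\<forall>t\<in>{0..T}. S t \<in> borel_measurable (OmP Om t)) \<and> NA Om T Qs S
         \<and> uval Om T Qs S U (\<lambda>_. 0) x > -\<infinity>
       \<longrightarrow> convex_risk (QT Om T Qs)
             {G\<in>W0 Om T. \<forall>z::real. uval Om T Qs S U (\<lambda>w. - G w) z < \<infinity>}
             (\<lambda>G. pval Om T Qs S U (\<lambda>w. - G w) x))
    \<and> ((\<forall>t\<in>{0..T}. S t \<in> borel_measurable (OmP Om t)) \<and> NA Om T Qs S
         \<and> uval Om T Qs S U (\<lambda>_. 0) x > -\<infinity>
         \<and> (\<forall>\<delta>>0. uval Om T Qs S U (\<lambda>_. 0) (x - \<delta>) < uval Om T Qs S U (\<lambda>_. 0) x)
       \<longrightarrow> pval Om T Qs S U (\<lambda>w. - (\<lambda>_. 0) w) x = 0)"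
proof -
  have A_eq_all: "\<forall>G\<in>W0 Om T. \<forall>y. AUG Om T Qs S U G y = AG Om T Qs S G y"
    by (rule AUG_eq_AG_all_capitals[OF A_eq])
  have "monetary_risk (QT Om T Qs) (W0 Om T) (\<lambda>G. pval Om T Qs S U (\<lambda>w. - G w) x)"
    by (rule monetary_risk_pval[OF A_eq_all U_util]) simp
  moreover have "convex_risk (QT Om T Qs) {G\<in>W0 Om T. \<forall>z::real. uval Om T Qs S U (\<lambda>w. - G w) z < \<infinity>}
      (\<lambda>G. pval Om T Qs S U (\<lambda>w. - G w) x)"
    by (rule convex_risk_pval[OF A_eq_all U_util S_meas]) auto
  moreover have "pval Om T Qs S U (\<lambda>w. - (\<lambda>_. 0) w) x = 0"
    if "\<forall>\<delta>>0. uval Om T Qs S U (\<lambda>_. 0) (x - \<delta>) < uval Om T Qs S U (\<lambda>_. 0) x"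
    using pval_zero_eq_0[OF that] by simp
  ultimately show ?thesis by blast
qed

end
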